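(* For every positive integer $N$ and all real $x,\delta\ge0$, \[ |\varrho_N(x)|\le\exp\!\left(-\frac{\pi^2\delta^2}{2}\cdot\#\mathcal{S}_1(N,\delta,x)\right). \]
   Context: For a positive integer $N$ and real $x$, $\varrho_N(x):=\prod_{n=1}^N\cos(\pi x/n)$. For $y\in\mathbb{R}$, $\|y\|$ denotes the distance from $y$ to the nearest integer. For positive integers $k,N$ and real $\delta,x\ge0$, $\mathcal{S}_k(N,\delta,x):=\{n\in\{1,\dots,N\} : \|x/n^k\|\ge\delta\}$. *)

theory Defs
  imports "HOL-Analysis.Analysis"
begin

definition rho :: "nat \<Rightarrow> real \<Rightarrow> real" where
  "rho N x = (\<Prod>n=1..N. cos (pi * x / real n))"

definition dist_int :: "real \<Rightarrow> real" where
  "dist_int y = (INF m\<in>(\<int>::real set). \<bar>y - m\<bar>)"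

definition S_set :: "nat \<Rightarrow> nat \<Rightarrow> real \<Rightarrow> real \<Rightarrow> nat set" where
  "S_set k N \<delta> x = {n \<in> {1..N}. dist_int (x / real n ^ k) \<ge> \<delta>}"

end

theory Submission
  imports Defs
begin

text \<open>Since \<open>\<bar>cos (\<pi> y)\<bar> = cos (\<pi> \<parallel>y\<parallel>)\<close> with \<open>\<parallel>y\<parallel> \<le> 1/2\<close>, and \<open>cos u \<le> exp (-u\<^sup>2/2)\<close> on \<open>[0, \<pi>/2]\<close>,
  every factor of \<open>\<rho>\<^sub>N(x)\<close> with \<open>n \<in> S_set 1 N \<delta> x\<close> has absolute value at most
  \<open>exp (-\<pi>\<^sup>2\<delta>\<^sup>2/2)\<close>, while all other factors have absolute value at most 1.\<close>

lemma dist_int_eq_abs_round: "dist_int y = \<bar>y - of_int (round y)\<bar>"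
  unfolding dist_int_def
proof (rule antisym)
  show "(INF m\<in>(\<int>::real set). \<bar>y - m\<bar>) \<le> \<bar>y - of_int (round y)\<bar>"
    by (rule cINF_lower) (auto intro: bdd_belowI[where m=0])
  have "(\<int>::real set) \<noteq> {}" by auto
  then show "\<bar>y - of_int (round y)\<bar> \<le> (INF m\<in>(\<int>::real set). \<bar>y - m\<bar>)"
    by (rule cINF_greatest) (auto elim!: Ints_cases intro: round_diff_minimal)
qed

lemma dist_int_le_half: "dist_int y \<le> 1/2"
  unfolding dist_int_eq_abs_round using of_int_round_abs_le[of y] by (simp add: abs_minus_commute)

lemma dist_int_nonneg: "0 \<le> dist_int y"
  unfolding dist_int_eq_abs_round by simp

lemma abs_cos_pi_eq_cos_pi_dist_int: "\<bar>cos (pi * y)\<bar> = cos (pi * dist_int y)"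
proof -
  define d where "d = y - of_int (round y)"
  have "pi * y = pi * d + pi * of_int (round y)"
    by (simp add: d_def algebra_simps)
  then have "\<bar>cos (pi * y)\<bar> = \<bar>cos (pi * d)\<bar>"
    by (simp add: cos_add)
  also have "\<dots> = \<bar>cos (pi * \<bar>d\<bar>)\<bar>"
    by (cases "d \<ge> 0") simp_all
  finally have "\<bar>cos (pi * y)\<bar> = \<bar>cos (pi * \<bar>d\<bar>)\<bar>" .
  moreover have "0 \<le> cos (pi * \<bar>d\<bar>)"
    using dist_int_le_half[of y] by (intro cos_ge_zero) (auto simp: d_def dist_int_eq_abs_round intro: order_trans[of _ 0])
  ultimately show ?thesis
    by (simp add: d_def dist_int_eq_abs_round)
qed

lemma mult_cos_le_sin:
  fixes t :: real
  assumes "0 \<le> t" "t \<le> pi/2"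
  shows "t * cos t \<le> sin t"
proof (cases "t = pi/2")
  case False
  then have "t < pi/2" using assms by simp
  then have cos_pos: "0 < cos t"
    using assms by (intro cos_gt_zero_pi) auto
  have "t \<le> \<bar>tan t\<bar>"
    using abs_tan_ge[of t] assms \<open>t < pi/2\<close> by simp
  also have "\<dots> = sin t / cos t"
    using cos_pos sin_ge_zero[of t] assms pi_gt_zero by (simp add: tan_def)
  finally show ?thesis
    using cos_pos by (simp add: field_simps)
next
  case True
  show ?thesis unfolding True by simp
qed

text \<open>The derivative of \<open>cos u * exp (u\<^sup>2/2)\<close> is \<open>exp (u\<^sup>2/2) * (u * cos u - sin u) \<le> 0\<close>.\<close>

lemma cos_le_exp_neg_square_half:
  fixes u :: real
  assumes "0 \<le> u" "u \<le> pi/2"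
  shows "cos u \<le> exp (- u\<^sup>2 / 2)"
proof -
  define g where "g t = cos t * exp (t\<^sup>2 / 2)" for t :: real
  have "g u \<le> g 0"
  proof (rule DERIV_nonpos_imp_nonincreasing[OF assms(1)])
    fix t assume t: "0 \<le> t" "t \<le> u"
    have "DERIV g t :> exp (t\<^sup>2/2) * (t * cos t - sin t)"
      unfolding g_def by (auto intro!: derivative_eq_intros simp: power2_eq_square algebra_simps)
    moreover have "exp (t\<^sup>2/2) * (t * cos t - sin t) \<le> 0"
      using mult_cos_le_sin[of t] t assms by (intro mult_nonneg_nonpos) auto
    ultimately show "\<exists>y. DERIV g t :> y \<and> y \<le> 0" by blast
  qed
  then show ?thesis
    by (simp add: g_def exp_minus field_simps)
qed

lemma abs_cos_pi_le_exp_if_dist_int_ge: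
  assumes "0 \<le> \<delta>" "\<delta> \<le> dist_int y"
  shows "\<bar>cos (pi * y)\<bar> \<le> exp (- (pi\<^sup>2 * \<delta>\<^sup>2 / 2))"
proof -
  have "\<bar>cos (pi * y)\<bar> \<le> exp (- (pi * dist_int y)\<^sup>2 / 2)"
    unfolding abs_cos_pi_eq_cos_pi_dist_int
    using dist_int_nonneg[of y] dist_int_le_half[of y] by (intro cos_le_exp_neg_square_half) auto
  also have "\<dots> \<le> exp (- (pi\<^sup>2 * \<delta>\<^sup>2 / 2))"
    using assms by (auto simp: power_mult_distrib intro!: mult_left_mono power_mono)
  finally show ?thesis .
qed

lemma prod_le_power_card_subset:
  fixes f :: "'a \<Rightarrow> 'b::linordered_idom"
  assumes "finite A" "S \<subseteq> A"
    and "\<And>x. x \<in> A \<Longrightarrow> 0 \<le> f x \<and> f x \<le> 1"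
    and "\<And>x. x \<in> S \<Longrightarrow> f x \<le> c"
  shows "prod f A \<le> c ^ card S"
proof -
  have "prod f A = prod f (A - S) * prod f S"
    using assms(2,1) by (rule prod.subset_diff)
  also have "\<dots> \<le> prod f S"
    using assms(2,3) by (intro mult_left_le_one_le prod_le_1 prod_nonneg) auto
  also have "\<dots> \<le> (\<Prod>x\<in>S. c)"
    by (intro prod_mono) (use assms(2-4) in auto)
  finally show ?thesis by simp
qed

theorem lemma3p1:
  fixes N :: nat and x \<delta> :: real
  assumes "N \<ge> 1" and "x \<ge> 0" and "\<delta> \<ge> 0"
  shows "\<bar>rho N x\<bar> \<le> exp (- (pi\<^sup>2 * \<delta>\<^sup>2 / 2) * real (card (S_set 1 N \<delta> x)))"
proof -
  have "\<bar>rho N x\<bar> = (\<Prod>n=1..N. \<bar>cos (pi * (x / real n))\<bar>)"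
    by (simp add: rho_def abs_prod)
  also have "\<dots> \<le> exp (- (pi\<^sup>2 * \<delta>\<^sup>2 / 2)) ^ card (S_set 1 N \<delta> x)"
  proof (rule prod_le_power_card_subset)
    show "S_set 1 N \<delta> x \<subseteq> {1..N}"
      by (auto simp: S_set_def)
    show "\<bar>cos (pi * (x / real n))\<bar> \<le> exp (- (pi\<^sup>2 * \<delta>\<^sup>2 / 2))" if "n \<in> S_set 1 N \<delta> x" for n
      using that \<open>\<delta> \<ge> 0\<close> by (intro abs_cos_pi_le_exp_if_dist_int_ge) (auto simp: S_set_def)
  qed auto
  also have "\<dots> = exp (- (pi\<^sup>2 * \<delta>\<^sup>2 / 2) * real (card (S_set 1 N \<delta> x)))"
    by (simp add: exp_of_nat_mult[symmetric] mult.commute)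
  finally show ?thesis .
qed

end
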